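(* Let $S\ge 1$ and $N^{\min}\ge 1$ be integers, and let $Q$ be a range query over dimensions $D^Q$ with $m=|D^Q|\ge 1$. Let $T$ be a table stored as clusters, and let $T'$ be obtained from $T$ by inserting a single row into one of its clusters. Assume every cluster of $T$ and of $T'$ has at most $S$ rows, and that $N^Q(T)\ge N^{\min}$. Then $$\bigl|\mathrm{Avg}_Q(T)-\mathrm{Avg}_Q(T')\bigr|\le \max\Bigl(\frac{\Delta_R}{N^{\min}},\ \frac{1}{N^{\min}+1}\Bigr),\qquad \text{where }\Delta_R=1-\Bigl(1-\tfrac1S\Bigr)^{m}.$$
   Context: A table is a finite multiset of rows; each row assigns a value to every dimension in a finite set $D$ of dimensions, each with a totally ordered domain. The table is stored as a set of clusters (disjoint sub-multisets of rows), each containing at most $S$ rows, where $S$ is a fixed positive integer (the cluster size). A range query $Q$ is given by a nonempty set $D^Q\subseteq D$ of dimensions and, for each $d\in D^Q$, an interval $[l_d,u_d]$. A row matches $Q$ if its value on each $d\in D^Q$ lies in $[l_d,u_d]$. For a cluster $C$ and $d\in D^Q$, define $R^d(C)=|\{r\in C: l_d\le r_d\le u_d\}|/S$, and define $R(C)=\prod_{d\in D^Q}R^d(C)$. For a nonempty cluster $C$ and a dimension $d$, let $v^d_{\min}(C)$ and $v^d_{\max}(C)$ be the minimum and maximum value of $d$ among the rows of $C$. The set $C^Q(T)$ of clusters covering $Q$ consists of the clusters $C$ of $T$ such that $[v^d_{\min}(C),v^d_{\max}(C)]\cap[l_d,u_d]\neq\emptyset$ for every $d\in D^Q$. Let $N^Q(T)=|C^Q(T)|$,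 and, when $N^Q(T)\ge1$, define $$\mathrm{Avg}_Q(T)=\frac{1}{N^Q(T)}\sum_{C\in C^Q(T)}R(C).$$ *)

theory Defs
  imports Complex_Main "HOL-Library.Multiset"
begin

text \<open>A table is a finite indexed family of clusters
(index set I, clusters C i). A range query is given by a set DQ of dimensions and
lower/upper bounds l d, u d.\<close>

definition Rd :: "nat \<Rightarrow> ('d \<Rightarrow> 'v::linorder) \<Rightarrow> ('d \<Rightarrow> 'v) \<Rightarrow> 'd \<Rightarrow> ('d \<Rightarrow> 'v) multiset \<Rightarrow> real" where
  "Rd S l u d C = real (size (filter_mset (\<lambda>r. l d \<le> r d \<and> r d \<le> u d) C)) / real S"

definition Rq :: "nat \<Rightarrow> 'd set \<Rightarrow> ('d \<Rightarrow> 'v::linorder) \<Rightarrow> ('d \<Rightarrow> 'v) \<Rightarrow> ('d \<Rightarrow> 'v) multiset \<Rightarrow> real" where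
  "Rq S DQ l u C = (\<Prod>d\<in>DQ. Rd S l u d C)"

definition vmin :: "'d \<Rightarrow> ('d \<Rightarrow> 'v::linorder) multiset \<Rightarrow> 'v" where
  "vmin d C = Min ((\<lambda>r. r d) ` set_mset C)"

definition vmax :: "'d \<Rightarrow> ('d \<Rightarrow> 'v::linorder) multiset \<Rightarrow> 'v" where
  "vmax d C = Max ((\<lambda>r. r d) ` set_mset C)"

definition covers :: "'d set \<Rightarrow> ('d \<Rightarrow> 'v::linorder) \<Rightarrow> ('d \<Rightarrow> 'v) \<Rightarrow> ('d \<Rightarrow> 'v) multiset \<Rightarrow> bool" where
  "covers DQ l u C \<longleftrightarrow> C \<noteq> {#} \<and>
     (\<forall>d\<in>DQ. {vmin d C .. vmax d C} \<inter> {l d .. u d} \<noteq> {})"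

definition coverSet :: "'i set \<Rightarrow> ('i \<Rightarrow> ('d \<Rightarrow> 'v::linorder) multiset) \<Rightarrow> 'd set \<Rightarrow> ('d \<Rightarrow> 'v) \<Rightarrow> ('d \<Rightarrow> 'v) \<Rightarrow> 'i set" where
  "coverSet I C DQ l u = {i \<in> I. covers DQ l u (C i)}"

definition NQ :: "'i set \<Rightarrow> ('i \<Rightarrow> ('d \<Rightarrow> 'v::linorder) multiset) \<Rightarrow> 'd set \<Rightarrow> ('d \<Rightarrow> 'v) \<Rightarrow> ('d \<Rightarrow> 'v) \<Rightarrow> nat" where
  "NQ I C DQ l u = card (coverSet I C DQ l u)"

definition AvgQ :: "nat \<Rightarrow> 'i set \<Rightarrow> ('i \<Rightarrow> ('d \<Rightarrow> 'v::linorder) multiset) \<Rightarrow> 'd set \<Rightarrow> ('d \<Rightarrow> 'v) \<Rightarrow> ('d \<Rightarrow> 'v) \<Rightarrow> real" where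
  "AvgQ S I C DQ l u = (\<Sum>i\<in>coverSet I C DQ l u. Rq S DQ l u (C i)) / real (NQ I C DQ l u)"

end

theory Submission
  imports Defs
begin

text \<open>Inserting a row changes only the cluster \<open>i0\<close>, which can gain but never lose coverage;
if it does not cover afterwards, the average is unchanged. If it covered before, exactly one term
of the average changes: each factor \<open>R\<^sup>d\<close> grows by at most \<open>1/S\<close>, and a product of \<open>m\<close> factors
in \<open>[0,1]\<close> that each grow by at most \<open>t\<close> grows by at most \<open>1 - (1 - t)\<^sup>m\<close>; dividing by the
number of covering clusters gives the first bound. If \<open>i0\<close> becomes covering, a new term in
\<open>[0,1]\<close> joins an average of \<open>N\<close> terms in \<open>[0,1]\<close>, which moves it by at most \<open>1/(N+1)\<close>.\<close>

lemma prod_add_minus_prod_le: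
  fixes a e :: "'a \<Rightarrow> real"
  assumes "finite A" "t \<le> 1"
    and "\<And>x. x \<in> A \<Longrightarrow> 0 \<le> a x \<and> 0 \<le> e x \<and> e x \<le> t \<and> a x + e x \<le> 1"
  shows "(\<Prod>x\<in>A. a x + e x) - (\<Prod>x\<in>A. a x) \<le> 1 - (1 - t) ^ card A"
  using assms(1,3)
proof (induction A rule: finite_induct)
  case empty
  then show ?case by simp
next
  case (insert y F)
  define P where "P = (\<Prod>x\<in>F. a x + e x)"
  define Q where "Q = (\<Prod>x\<in>F. a x)"
  have ay: "0 \<le> a y" "0 \<le> e y" "e y \<le> t" "a y + e y \<le> 1"
    using insert.prems by auto
  have Q0: "0 \<le> Q" unfolding Q_def using insert.prems by (simp add: prod_nonneg)
  have QP: "Q \<le> P" unfolding P_def Q_def using insert.prems by (intro prod_mono) auto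
  have P1: "P \<le> 1" unfolding P_def using insert.prems by (intro prod_le_1) auto
  have IH: "P - Q \<le> 1 - (1 - t) ^ card F"
    using insert.IH insert.prems by (simp add: P_def Q_def)
  have "(a y + e y) * P - a y * Q = a y * (P - Q) + e y * P"
    by (simp add: algebra_simps)
  also have "\<dots> \<le> (1 - e y) * (P - Q) + e y"
    using ay QP P1 by (intro add_mono mult_right_mono mult_left_le) auto
  also have "\<dots> \<le> (1 - e y) * (1 - (1 - t) ^ card F) + e y"
    using ay IH by (intro add_right_mono mult_left_mono) auto
  also have "\<dots> = 1 - (1 - e y) * (1 - t) ^ card F"
    by (simp add: algebra_simps)
  also have "\<dots> \<le> 1 - (1 - t) * (1 - t) ^ card F"
    using ay assms(2) by (simp add: mult_right_mono)
  finally show ?case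
    using insert.hyps by (simp add: P_def Q_def)
qed

lemma Rd_nonneg: "0 \<le> Rd S l u d C"
  by (simp add: Rd_def)

lemma Rd_le_1:
  assumes "size C \<le> S"
  shows "Rd S l u d C \<le> 1"
proof -
  have "size (filter_mset (\<lambda>r. l d \<le> r d \<and> r d \<le> u d) C) \<le> S"
    using assms size_filter_mset_lesseq order_trans by blast
  then show ?thesis by (cases "S = 0") (simp_all add: Rd_def)
qed

lemma Rq_nonneg: "0 \<le> Rq S DQ l u C"
  by (simp add: Rq_def Rd_nonneg prod_nonneg)

lemma Rq_le_1: "size C \<le> S \<Longrightarrow> Rq S DQ l u C \<le> 1"
  by (simp add: Rq_def Rd_nonneg Rd_le_1 prod_le_1)

lemma Rd_add_mset:
  "Rd S l u d (add_mset r C) = Rd S l u d C + (if l d \<le> r d \<and> r d \<le> u d then 1 / real S else 0)"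
  by (simp add: Rd_def add_divide_distrib)

lemma Rq_add_mset_diff_le:
  assumes "finite DQ" "S \<ge> 1" "size (add_mset r C) \<le> S"
  shows "\<bar>Rq S DQ l u (add_mset r C) - Rq S DQ l u C\<bar> \<le> 1 - (1 - 1 / real S) ^ card DQ"
proof -
  define e where "e d = (if l d \<le> r d \<and> r d \<le> u d then 1 / real S else 0)" for d
  have Rd_add: "Rd S l u d (add_mset r C) = Rd S l u d C + e d" for d
    by (simp add: e_def Rd_add_mset)
  have e_bounds: "0 \<le> e d" "e d \<le> 1 / real S" for d
    by (simp_all add: e_def)
  have "Rq S DQ l u C \<le> Rq S DQ l u (add_mset r C)"
    unfolding Rq_def Rd_add using e_bounds by (intro prod_mono) (auto simp: Rd_nonneg)
  moreover have "Rq S DQ l u (add_mset r C) - Rq S DQ l u C \<le> 1 - (1 - 1 / real S) ^ card DQ"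
    unfolding Rq_def Rd_add using assms(1,2)
    by (intro prod_add_minus_prod_le)
      (auto simp: e_bounds Rd_nonneg Rd_le_1[OF assms(3)] simp flip: Rd_add)
  ultimately show ?thesis by simp
qed

lemma covers_add_mset:
  assumes "covers DQ l u C"
  shows "covers DQ l u (add_mset r C)"
  unfolding covers_def
proof (intro conjI ballI)
  fix d assume "d \<in> DQ"
  have "C \<noteq> {#}" using assms by (simp add: covers_def)
  then have "vmin d (add_mset r C) \<le> vmin d C" "vmax d C \<le> vmax d (add_mset r C)"
    by (simp_all add: vmin_def vmax_def)
  then have "{vmin d C .. vmax d C} \<subseteq> {vmin d (add_mset r C) .. vmax d (add_mset r C)}"
    by auto
  then show "{vmin d (add_mset r C) .. vmax d (add_mset r C)} \<inter> {l d .. u d} \<noteq> {}"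
    using assms \<open>d \<in> DQ\<close> unfolding covers_def by blast
qed simp

lemma coverSet_fun_upd_add_mset:
  assumes "i0 \<in> I"
  shows "coverSet I (C(i0 := add_mset r (C i0))) DQ l u =
    (if covers DQ l u (add_mset r (C i0)) then insert i0 (coverSet I C DQ l u)
     else coverSet I C DQ l u)"
  using assms covers_add_mset[of DQ l u "C i0" r] by (auto simp: coverSet_def)

lemma average_change_one_term:
  fixes f g :: "'a \<Rightarrow> real"
  assumes "finite A" "i \<in> A" "\<bar>g i - f i\<bar> \<le> B" "\<And>j. j \<in> A \<Longrightarrow> j \<noteq> i \<Longrightarrow> g j = f j"
  shows "\<bar>sum f A / card A - sum g A / card A\<bar> \<le> B / card A"
proof -
  have "sum g (A - {i}) = sum f (A - {i})"
    using assms(4) by (intro sum.cong) auto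
  then have "sum g A - sum f A = g i - f i"
    using sum.remove[OF assms(1,2), of f] sum.remove[OF assms(1,2), of g] by simp
  then have "\<bar>sum f A - sum g A\<bar> \<le> B"
    using assms(3) by linarith
  then show ?thesis
    by (simp add: diff_divide_distrib[symmetric] abs_divide divide_right_mono)
qed

lemma average_insert_diff_le:
  fixes f :: "'a \<Rightarrow> real"
  assumes "finite A" "A \<noteq> {}" "i \<notin> A" "\<And>j. j \<in> insert i A \<Longrightarrow> 0 \<le> f j \<and> f j \<le> 1"
  shows "\<bar>sum f A / card A - sum f (insert i A) / card (insert i A)\<bar> \<le> 1 / (card A + 1)"
proof -
  define n where "n = real (card A)"
  define s where "s = sum f A"
  have n1: "1 \<le> n" using assms(1,2) by (simp add: n_def Suc_le_eq card_gt_0_iff)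
  have s_bounds: "0 \<le> s" "s \<le> n"
    using assms(4) sum_mono[of A f "\<lambda>_. 1"] by (auto simp: s_def n_def intro: sum_nonneg)
  have fi: "0 \<le> f i" "f i \<le> 1" using assms(4) by auto
  have "0 \<le> n * f i" "n * f i \<le> n"
    using fi n1 by (simp_all add: mult_left_le)
  then have "\<bar>s - n * f i\<bar> \<le> n"
    using s_bounds by (simp add: abs_le_iff)
  then have "\<bar>s - n * f i\<bar> / (n * (n + 1)) \<le> n / (n * (n + 1))"
    using n1 by (intro divide_right_mono) auto
  moreover have "s / n - (f i + s) / (n + 1) = (s - n * f i) / (n * (n + 1))"
    using n1 by (simp add: field_simps)
  ultimately have "\<bar>s / n - (f i + s) / (n + 1)\<bar> \<le> 1 / (n + 1)"
    using n1 by (simp add: abs_divide)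
  then show ?thesis
    using assms(1,3) by (simp add: s_def n_def add.commute)
qed

lemma AvgQ_add_mset_covering_diff_le:
  assumes "finite DQ" "S \<ge> 1" "finite I" "i0 \<in> coverSet I C DQ l u"
    and "size (add_mset r (C i0)) \<le> S"
  shows "\<bar>AvgQ S I C DQ l u - AvgQ S I (C(i0 := add_mset r (C i0))) DQ l u\<bar>
    \<le> (1 - (1 - 1 / real S) ^ card DQ) / NQ I C DQ l u"
proof -
  have "i0 \<in> I" "covers DQ l u (C i0)" using assms(4) by (simp_all add: coverSet_def)
  then have same: "coverSet I (C(i0 := add_mset r (C i0))) DQ l u = coverSet I C DQ l u"
    using assms(4) by (simp add: coverSet_fun_upd_add_mset covers_add_mset insert_absorb)
  have fin: "finite (coverSet I C DQ l u)" using assms(3) by (simp add: coverSet_def)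
  show ?thesis
    unfolding AvgQ_def NQ_def same
  proof (rule average_change_one_term[OF fin assms(4)])
    show "\<bar>Rq S DQ l u ((C(i0 := add_mset r (C i0))) i0) - Rq S DQ l u (C i0)\<bar>
        \<le> 1 - (1 - 1 / real S) ^ card DQ"
      using Rq_add_mset_diff_le[OF assms(1,2,5)] by simp
  qed simp
qed

lemma AvgQ_add_mset_newly_covering_diff_le:
  assumes "finite I" "i0 \<in> I" "i0 \<notin> coverSet I C DQ l u" "covers DQ l u (add_mset r (C i0))"
    and "coverSet I C DQ l u \<noteq> {}" "\<forall>i\<in>I. size ((C(i0 := add_mset r (C i0))) i) \<le> S"
  shows "\<bar>AvgQ S I C DQ l u - AvgQ S I (C(i0 := add_mset r (C i0))) DQ l u\<bar>
    \<le> 1 / (NQ I C DQ l u + 1)"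
proof -
  define C' where "C' = C(i0 := add_mset r (C i0))"
  define CS where "CS = coverSet I C DQ l u"
  have CS': "coverSet I C' DQ l u = insert i0 CS"
    using assms(2,4) by (simp add: C'_def CS_def coverSet_fun_upd_add_mset)
  have "sum (\<lambda>i. Rq S DQ l u (C' i)) CS = sum (\<lambda>i. Rq S DQ l u (C i)) CS"
    using assms(3) by (intro sum.cong) (auto simp: C'_def CS_def)
  moreover have "0 \<le> Rq S DQ l u (C' j) \<and> Rq S DQ l u (C' j) \<le> 1" if "j \<in> insert i0 CS" for j
  proof -
    have "j \<in> I" using that assms(2) by (auto simp: CS_def coverSet_def)
    then show ?thesis using assms(6) by (simp add: C'_def Rq_nonneg Rq_le_1)
  qed
  moreover have "finite CS" using assms(1) by (simp add: CS_def coverSet_def)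
  ultimately have "\<bar>sum (\<lambda>i. Rq S DQ l u (C i)) CS / card CS
      - sum (\<lambda>i. Rq S DQ l u (C' i)) (insert i0 CS) / card (insert i0 CS)\<bar> \<le> 1 / (card CS + 1)"
    using average_insert_diff_le[of CS i0 "\<lambda>i. Rq S DQ l u (C' i)"] assms(3,5)
    by (simp add: CS_def)
  then show ?thesis
    unfolding AvgQ_def NQ_def C'_def[symmetric] CS_def[symmetric] CS' .
qed

lemma AvgQ_add_mset_not_covering_eq:
  assumes "\<not> covers DQ l u (add_mset r (C i0))"
  shows "AvgQ S I (C(i0 := add_mset r (C i0))) DQ l u = AvgQ S I C DQ l u"
proof -
  have "\<not> covers DQ l u (C i0)" using assms covers_add_mset by blast
  then have same: "coverSet I (C(i0 := add_mset r (C i0))) DQ l u = coverSet I C DQ l u"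
    and "i0 \<notin> coverSet I C DQ l u"
    using assms by (auto simp: coverSet_def)
  then have "(\<Sum>i\<in>coverSet I C DQ l u. Rq S DQ l u ((C(i0 := add_mset r (C i0))) i))
      = (\<Sum>i\<in>coverSet I C DQ l u. Rq S DQ l u (C i))"
    by (intro sum.cong) auto
  then show ?thesis
    by (simp add: AvgQ_def NQ_def same)
qed

theorem mainTheorem2:
  fixes S Nmin :: nat
    and D DQ :: "'d set"
    and l u :: "'d \<Rightarrow> 'v::linorder"
    and I :: "'i set"
    and C :: "'i \<Rightarrow> ('d \<Rightarrow> 'v) multiset"
    and i0 :: 'i
    and r :: "'d \<Rightarrow> 'v"
  assumes "S \<ge> 1" and "Nmin \<ge> 1"
    and "finite D" and "DQ \<subseteq> D" and "DQ \<noteq> {}"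
    and "finite I" and "i0 \<in> I"
    and "\<forall>i\<in>I. size (C i) \<le> S"
    and "\<forall>i\<in>I. size ((C(i0 := add_mset r (C i0))) i) \<le> S"
    and "NQ I C DQ l u \<ge> Nmin"
  shows "\<bar>AvgQ S I C DQ l u - AvgQ S I (C(i0 := add_mset r (C i0))) DQ l u\<bar>
           \<le> max ((1 - (1 - 1 / real S) ^ card DQ) / real Nmin) (1 / (real Nmin + 1))"
proof -
  define B where "B = 1 - (1 - 1 / real S) ^ card DQ"
  define N where "N = NQ I C DQ l u"
  have B_nonneg: "0 \<le> B" using assms(1) by (simp add: B_def power_le_one)
  have nonempty: "coverSet I C DQ l u \<noteq> {}"
    using assms(2,10) by (auto simp: NQ_def)
  consider "i0 \<in> coverSet I C DQ l u"
    | "i0 \<notin> coverSet I C DQ l u" "covers DQ l u (add_mset r (C i0))"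
    | "\<not> covers DQ l u (add_mset r (C i0))"
    by blast
  then show ?thesis
  proof cases
    case 1
    have "size (add_mset r (C i0)) \<le> S" using assms(7,9) by (metis fun_upd_same)
    then have "\<bar>AvgQ S I C DQ l u - AvgQ S I (C(i0 := add_mset r (C i0))) DQ l u\<bar> \<le> B / N"
      unfolding B_def N_def
      by (rule AvgQ_add_mset_covering_diff_le[OF finite_subset[OF assms(4,3)] assms(1,6) 1])
    also have "\<dots> \<le> B / Nmin"
      using assms(2,10) B_nonneg by (simp add: N_def frac_le)
    finally show ?thesis by (simp add: B_def)
  next
    case 2
    have "\<bar>AvgQ S I C DQ l u - AvgQ S I (C(i0 := add_mset r (C i0))) DQ l u\<bar> \<le> 1 / (N + 1)"
      unfolding N_def by (rule AvgQ_add_mset_newly_covering_diff_le[OF assms(6,7) 2 nonempty assms(9)])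
    also have "\<dots> \<le> 1 / (real Nmin + 1)"
      using assms(10) by (simp add: N_def frac_le)
    finally show ?thesis by simp
  next
    case 3
    then show ?thesis by (simp add: AvgQ_add_mset_not_covering_eq le_max_iff_disj)
  qed
qed

end
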